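(* Let $f:\mathbb{R}_+^n\to\mathbb{R}$. Then $f$ is supermodular if and only if for all $x,y,z\in\mathbb{R}_+^n$ with $y\wedge z=0$ one has $f(x\vee y\vee z)+f(x)\ge f(x\vee y)+f(x\vee z)$.
   Context: For $x,y\in\mathbb{R}_+^n$, $x\vee y$ and $x\wedge y$ denote the componentwise maximum and minimum. A function $f:\mathbb{R}_+^n\to\mathbb{R}$ is supermodular if $f(x\vee y)+f(x\wedge y)\ge f(x)+f(y)$ for all $x,y\in\mathbb{R}_+^n$. *)

theory Defs
  imports "HOL-Analysis.Analysis"
begin

definition nonneg_orthant :: "(real ^ 'n) set" where
  "nonneg_orthant = {x. \<forall>i. 0 \<le> x $ i}"

definition vjoin :: "real ^ 'n \<Rightarrow> real ^ 'n \<Rightarrow> real ^ 'n" where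
  "vjoin x y = (\<chi> i. max (x $ i) (y $ i))"

definition vmeet :: "real ^ 'n \<Rightarrow> real ^ 'n \<Rightarrow> real ^ 'n" where
  "vmeet x y = (\<chi> i. min (x $ i) (y $ i))"

definition supermodular_on_orthant :: "(real ^ 'n \<Rightarrow> real) \<Rightarrow> bool" where
  "supermodular_on_orthant f \<longleftrightarrow>
     (\<forall>x\<in>nonneg_orthant. \<forall>y\<in>nonneg_orthant.
        f (vjoin x y) + f (vmeet x y) \<ge> f x + f y)"

end

theory Submission
  imports Defs
begin

text \<open>Two points a, b of the orthant decompose as a = x \<or> y and b = x \<or> z with x = a \<and> b
  and disjointly supported y, z (the parts where a, resp. b, is strictly larger); conversely
  for disjoint y, z the meet of x \<or> y and x \<or> z is x again. So the two inequalities are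
  instances of each other.\<close>

lemma vjoin_mem_nonneg_orthant:
  "x \<in> nonneg_orthant \<Longrightarrow> vjoin x y \<in> nonneg_orthant"
  by (auto simp: nonneg_orthant_def vjoin_def le_max_iff_disj)

lemma vmeet_mem_nonneg_orthant:
  "x \<in> nonneg_orthant \<Longrightarrow> y \<in> nonneg_orthant \<Longrightarrow> vmeet x y \<in> nonneg_orthant"
  by (auto simp: nonneg_orthant_def vmeet_def)

lemma vjoin_vjoin_common:
  "vjoin (vjoin x y) (vjoin x z) = vjoin (vjoin x y) z"
  by (auto simp: vjoin_def vec_eq_iff)

lemma vmeet_vjoin_distrib:
  "vmeet (vjoin x y) (vjoin x z) = vjoin x (vmeet y z)"
  by (auto simp: vjoin_def vmeet_def vec_eq_iff max_min_distrib2)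

lemma vjoin_zero_right:
  "x \<in> nonneg_orthant \<Longrightarrow> vjoin x 0 = x"
  by (auto simp: nonneg_orthant_def vjoin_def vec_eq_iff max_absorb1)

lemma nonneg_orthant_disjoint_decomposition:
  assumes "a \<in> nonneg_orthant" and "b \<in> nonneg_orthant"
  obtains y z where "y \<in> nonneg_orthant" "z \<in> nonneg_orthant" "vmeet y z = 0"
    "vjoin (vmeet a b) y = a" "vjoin (vmeet a b) z = b"
proof
  let ?y = "\<chi> i. if b $ i < a $ i then a $ i else 0"
  let ?z = "\<chi> i. if a $ i < b $ i then b $ i else 0"
  have a: "\<And>i. 0 \<le> a $ i" and b: "\<And>i. 0 \<le> b $ i"
    using assms by (auto simp: nonneg_orthant_def)
  show "?y \<in> nonneg_orthant" "?z \<in> nonneg_orthant"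
    using a b by (auto simp: nonneg_orthant_def)
  show "vmeet ?y ?z = 0"
    using a b by (auto simp: vmeet_def vec_eq_iff min_def intro: order.antisym[OF _ a])
  show "vjoin (vmeet a b) ?y = a" "vjoin (vmeet a b) ?z = b"
    using a b by (auto simp: vjoin_def vmeet_def vec_eq_iff max_def min_def
        intro: order.antisym[OF _ a] order.antisym[OF _ b])
qed

theorem lemma3p4:
  fixes f :: "real ^ 'n \<Rightarrow> real"
  shows "supermodular_on_orthant f \<longleftrightarrow>
    (\<forall>x\<in>nonneg_orthant. \<forall>y\<in>nonneg_orthant. \<forall>z\<in>nonneg_orthant.
       vmeet y z = 0 \<longrightarrow>
       f (vjoin (vjoin x y) z) + f x \<ge> f (vjoin x y) + f (vjoin x z))"
    (is "_ \<longleftrightarrow> ?disjoint")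
proof
  assume super: "supermodular_on_orthant f"
  show ?disjoint
  proof (intro ballI impI)
    fix x y z :: "real ^ 'n"
    assume x: "x \<in> nonneg_orthant" and "y \<in> nonneg_orthant" "z \<in> nonneg_orthant"
      and "vmeet y z = 0"
    then have meet: "vmeet (vjoin x y) (vjoin x z) = x"
      by (simp add: vmeet_vjoin_distrib vjoin_zero_right)
    have "f (vjoin (vjoin x y) (vjoin x z)) + f (vmeet (vjoin x y) (vjoin x z))
        \<ge> f (vjoin x y) + f (vjoin x z)"
      using super x by (simp add: supermodular_on_orthant_def vjoin_mem_nonneg_orthant)
    then show "f (vjoin (vjoin x y) z) + f x \<ge> f (vjoin x y) + f (vjoin x z)"
      by (simp only: meet vjoin_vjoin_common)
  qed
next
  assume disjoint: ?disjoint
  show "supermodular_on_orthant f"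
    unfolding supermodular_on_orthant_def
  proof (intro ballI)
    fix a b :: "real ^ 'n"
    assume "a \<in> nonneg_orthant" "b \<in> nonneg_orthant"
    moreover obtain y z where "y \<in> nonneg_orthant" "z \<in> nonneg_orthant" "vmeet y z = 0"
      and a: "vjoin (vmeet a b) y = a" and b: "vjoin (vmeet a b) z = b"
      using \<open>a \<in> nonneg_orthant\<close> \<open>b \<in> nonneg_orthant\<close>
      by (rule nonneg_orthant_disjoint_decomposition)
    ultimately have "f (vjoin a z) + f (vmeet a b) \<ge> f a + f b"
      using disjoint vmeet_mem_nonneg_orthant a b by metis
    then show "f (vjoin a b) + f (vmeet a b) \<ge> f a + f b"
      by (metis a b vjoin_vjoin_common)
  qed
qed

end
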